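(* If $G$ is a finite group of isometries of the rooted tree $\mathcal T$, then its centralizer $C_W(G)$ in $W=\mathrm{Aut}(\mathcal T)$ is uncountable.
   Context: $\mathcal T=X^*$ is the $d$-regular rooted tree over a finite alphabet $X$ with $d=|X|\ge2$, and $W$ its group of isometries. *)

theory Defs
  imports Main "HOL-Library.Countable_Set" "HOL-Library.Cardinality"
begin

text \<open>The tree X* : vertices are words (lists) over the alphabet 'a; edges join
  a word u with u @ [x].\<close>

definition tree_adj :: "'a list \<Rightarrow> 'a list \<Rightarrow> bool" where
  "tree_adj u v \<longleftrightarrow> (\<exists>x. v = u @ [x]) \<or> (\<exists>x. u = v @ [x])"

definition tree_isometries :: "('a list \<Rightarrow> 'a list) set" where
  "tree_isometries = {f. bij f \<and> (\<forall>u v. tree_adj u v \<longleftrightarrow> tree_adj (f u) (f v))}"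

definition centralizer_W :: "('a list \<Rightarrow> 'a list) set \<Rightarrow> ('a list \<Rightarrow> 'a list) set" where
  "centralizer_W G = {f \<in> tree_isometries. \<forall>g\<in>G. f \<circ> g = g \<circ> f}"

end

theory Submission
  imports Defs
begin

text \<open>An isometry of \<open>X\<^sup>*\<close> fixes the root (the only vertex of degree \<open>|X|\<close>) and hence
  preserves lengths and prefixes.  Choose a vertex \<open>v\<close> whose stabiliser in the finite group \<open>G\<close>
  has minimal size; then \<open>G\<^sub>v\<close> fixes the whole subtree \<open>vX\<^sup>*\<close>, so the translates
  \<open>g(vX\<^sup>*)\<close> are either equal with \<open>g, h\<close> agreeing on them, or disjoint.  Every isometry \<open>a\<close> of
  the tree therefore lifts to the isometry acting as \<open>g(vw) \<mapsto> g(v a(w))\<close> on the translates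
  and as the identity elsewhere; it commutes with \<open>G\<close>, and \<open>a\<close> is recovered from its lift.
  So \<open>C\<^sub>W(G)\<close> contains a copy of \<open>W\<close>, which is uncountable: swapping two letters at an
  arbitrary set of levels gives an injection of the subsets of \<open>\<nat>\<close> into \<open>W\<close>.\<close>

lemma tree_isometry_adj:
  "f \<in> tree_isometries \<Longrightarrow> tree_adj (f u) (f w) \<longleftrightarrow> tree_adj u w"
  by (simp add: tree_isometries_def)

lemma tree_isometry_inv_apply:
  "f \<in> tree_isometries \<Longrightarrow> f (inv f u) = u"
  by (simp add: tree_isometries_def bij_is_surj surj_f_inv_f)

lemma inv_tree_isometry:
  assumes "f \<in> tree_isometries"
  shows "inv f \<in> tree_isometries"
proof -
  have "tree_adj (inv f u) (inv f w) \<longleftrightarrow> tree_adj u w" for u w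
    using tree_isometry_adj[OF assms, of "inv f u" "inv f w"]
    by (simp add: tree_isometry_inv_apply[OF assms])
  with assms show ?thesis by (simp add: tree_isometries_def bij_imp_bij_inv)
qed

lemma card_neighbours_tree_isometry:
  assumes "f \<in> tree_isometries"
  shows "card {w. tree_adj (f u) w} = card {w. tree_adj u w}"
proof -
  have "inj f" using assms by (simp add: tree_isometries_def bij_is_inj)
  have "tree_adj u (inv f w)" if "tree_adj (f u) w" for w
    using that tree_isometry_adj[OF assms, of u "inv f w"] tree_isometry_inv_apply[OF assms] by simp
  then have "bij_betw f {w. tree_adj u w} {w. tree_adj (f u) w}"
    using tree_isometry_adj[OF assms, of u] tree_isometry_inv_apply[OF assms] \<open>inj f\<close>
    by (intro bij_betw_byWitness[where f' = "inv f"]) auto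
  then show ?thesis by (simp add: bij_betw_same_card)
qed

lemma card_neighbours_Nil: "card {w :: 'a::finite list. tree_adj [] w} = CARD('a)"
proof -
  have "{w. tree_adj [] w} = range (\<lambda>x::'a. [x])" by (auto simp: tree_adj_def)
  then show ?thesis by (simp add: card_image inj_on_def)
qed

lemma card_neighbours_snoc:
  fixes u :: "'a::finite list"
  shows "card {w. tree_adj (u @ [z]) w} = Suc CARD('a)"
proof -
  have "{w. tree_adj (u @ [z]) w} = insert u (range (\<lambda>x::'a. u @ [z, x]))"
    by (auto simp: tree_adj_def)
  moreover have "u \<notin> range (\<lambda>x::'a. u @ [z, x])" by auto
  ultimately show ?thesis by (simp add: card_image inj_on_def)
qed

lemma tree_isometry_Nil:
  assumes "f \<in> tree_isometries"
  shows "f [] = ([] :: 'a::finite list)"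
proof (cases "f []" rule: rev_exhaust)
  case (snoc u z)
  then show ?thesis
    using card_neighbours_tree_isometry[OF assms, of "[]"]
    by (simp only: card_neighbours_Nil card_neighbours_snoc)
qed

lemma tree_isometry_snoc:
  assumes "f \<in> tree_isometries"
  shows "\<exists>y. f (u @ [x]) = f u @ [y :: 'a::finite]"
proof (induction u arbitrary: x rule: rev_induct)
  case Nil
  have "tree_adj (f []) (f [x])"
    using tree_isometry_adj[OF assms] by (simp add: tree_adj_def)
  then show ?case by (simp add: tree_isometry_Nil[OF assms] tree_adj_def)
next
  case (snoc z u)
  obtain y where y: "f (u @ [z]) = f u @ [y]" using snoc.IH by blast
  have "tree_adj (f (u @ [z])) (f (u @ [z, x]))"
    using tree_isometry_adj[OF assms] by (simp add: tree_adj_def)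
  moreover have "f (u @ [z, x]) \<noteq> f u"
    using assms by (simp add: tree_isometries_def bij_is_inj inj_eq)
  ultimately show ?case using y by (auto simp: tree_adj_def)
qed

lemma length_tree_isometry:
  "f \<in> tree_isometries \<Longrightarrow> length (f u) = length (u :: 'a::finite list)"
proof (induction u rule: rev_induct)
  case (snoc x u)
  then show ?case by (metis tree_isometry_snoc length_append_singleton)
qed (simp add: tree_isometry_Nil)

lemma take_tree_isometry_append:
  assumes "f \<in> tree_isometries"
  shows "take (length u) (f (u @ w)) = f (u :: 'a::finite list)"
proof (induction w rule: rev_induct)
  case (snoc x w)
  obtain y where "f (u @ w @ [x]) = f (u @ w) @ [y]"
    using tree_isometry_snoc[OF assms, of "u @ w"] by auto
  then show ?case
    using snoc.IH length_tree_isometry[OF assms, of "u @ w"] by simp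
qed (simp add: length_tree_isometry[OF assms])

lemma tree_adj_preserved_by_snoc_map:
  assumes "\<And>u x. \<exists>y. h (u @ [x]) = h u @ [y]" and "tree_adj u w"
  shows "tree_adj (h u) (h w)"
  using assms unfolding tree_adj_def by metis

lemma tree_isometryI:
  assumes f_snoc: "\<And>u x. \<exists>y. f (u @ [x]) = f u @ [y]"
    and g_snoc: "\<And>u x. \<exists>y. g (u @ [x]) = g u @ [y]"
    and "g \<circ> f = id" and "f \<circ> g = id"
  shows "f \<in> tree_isometries"
proof -
  have "tree_adj (f u) (f w) \<longleftrightarrow> tree_adj u w" for u w
  proof
    assume "tree_adj (f u) (f w)"
    then have "tree_adj (g (f u)) (g (f w))"
      using g_snoc by (rule tree_adj_preserved_by_snoc_map[where h = g, rotated])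
    then show "tree_adj u w" using pointfree_idE[OF \<open>g \<circ> f = id\<close>] by simp
  qed (use f_snoc in \<open>rule tree_adj_preserved_by_snoc_map[where h = f]\<close>)
  moreover have "bij f" using \<open>g \<circ> f = id\<close> \<open>f \<circ> g = id\<close> by (rule o_bij)
  ultimately show ?thesis by (simp add: tree_isometries_def)
qed

definition levelwise :: "(nat \<Rightarrow> 'a \<Rightarrow> 'a) \<Rightarrow> 'a list \<Rightarrow> 'a list" where
  "levelwise \<sigma> w = map (\<lambda>i. \<sigma> i (w ! i)) [0..<length w]"

lemma levelwise_snoc: "levelwise \<sigma> (w @ [x]) = levelwise \<sigma> w @ [\<sigma> (length w) x]"
  by (simp add: levelwise_def nth_append)

lemma nth_levelwise: "i < length w \<Longrightarrow> levelwise \<sigma> w ! i = \<sigma> i (w ! i)"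
  by (simp add: levelwise_def)

lemma levelwise_comp: "levelwise \<sigma> \<circ> levelwise \<tau> = levelwise (\<lambda>i. \<sigma> i \<circ> \<tau> i)"
  by (simp add: fun_eq_iff levelwise_def)

lemma levelwise_id: "levelwise (\<lambda>_. id) = id"
  by (rule ext, rule nth_equalityI) (simp_all add: levelwise_def)

lemma levelwise_tree_isometry:
  assumes "\<And>i. bij (\<sigma> i)"
  shows "levelwise \<sigma> \<in> tree_isometries"
proof (rule tree_isometryI)
  have inverse: "inv (\<sigma> i) \<circ> \<sigma> i = id" "\<sigma> i \<circ> inv (\<sigma> i) = id" for i
    using assms[of i] by (simp_all add: bij_is_inj bij_is_surj flip: surj_iff)
  show "levelwise (\<lambda>i. inv (\<sigma> i)) \<circ> levelwise \<sigma> = id"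
    "levelwise \<sigma> \<circ> levelwise (\<lambda>i. inv (\<sigma> i)) = id"
    by (simp_all only: levelwise_comp inverse levelwise_id)
qed (simp_all add: levelwise_snoc)

lemma uncountable_UNIV_nat_set: "uncountable (UNIV :: nat set set)"
proof
  assume "countable (UNIV :: nat set set)"
  then have "range (from_nat_into UNIV) = Pow (UNIV :: nat set)"
    by simp
  then show False using Cantors_theorem by blast
qed

lemma uncountable_tree_isometries:
  assumes "CARD('a::finite) \<ge> 2"
  shows "uncountable (tree_isometries :: ('a list \<Rightarrow> 'a list) set)"
proof
  obtain x0 x1 :: 'a where "x0 \<noteq> x1"
    using assms card_le_Suc0_iff_eq[of "UNIV :: 'a set"] by fastforce
  define swap :: "'a \<Rightarrow> 'a" where "swap = id(x0 := x1, x1 := x0)"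
  have "bij swap" by (rule o_bij[of swap]) (auto simp: swap_def)
  define flip where "flip S = levelwise (\<lambda>i. if i \<in> S then swap else id)" for S
  have "inj flip"
  proof
    fix S S' assume "flip S = flip S'"
    then have level: "flip S (replicate (Suc i) x0) ! i = flip S' (replicate (Suc i) x0) ! i" for i
      by simp
    have "swap x0 \<noteq> x0" using \<open>x0 \<noteq> x1\<close> by (simp add: swap_def)
    then have "i \<in> S \<longleftrightarrow> i \<in> S'" for i
      using level[of i] by (auto simp: flip_def nth_levelwise simp del: replicate_Suc split: if_splits)
    then show "S = S'" by blast
  qed
  moreover have "range flip \<subseteq> tree_isometries"
    using \<open>bij swap\<close> by (auto simp: flip_def intro: levelwise_tree_isometry)
  moreover assume "countable (tree_isometries :: ('a list \<Rightarrow> 'a list) set)"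
  ultimately show False
    using uncountable_UNIV_nat_set countable_image_inj_on countable_subset by blast
qed

definition stabilizer :: "('a list \<Rightarrow> 'a list) set \<Rightarrow> 'a list \<Rightarrow> ('a list \<Rightarrow> 'a list) set" where
  "stabilizer G u = {g \<in> G. g u = u}"

lemma stabilizer_append_subset:
  fixes G :: "('a::finite list \<Rightarrow> 'a list) set"
  assumes "G \<subseteq> tree_isometries"
  shows "stabilizer G (u @ w) \<subseteq> stabilizer G u"
proof
  fix g assume "g \<in> stabilizer G (u @ w)"
  then have "g \<in> G" and "g (u @ w) = u @ w" by (simp_all add: stabilizer_def)
  moreover have "take (length u) (g (u @ w)) = g u"
    using assms \<open>g \<in> G\<close> by (blast intro: take_tree_isometry_append)
  ultimately show "g \<in> stabilizer G u" by (simp add: stabilizer_def)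
qed

lemma ex_stable_vertex:
  fixes G :: "('a::finite list \<Rightarrow> 'a list) set"
  assumes "G \<subseteq> tree_isometries" and "finite G"
  shows "\<exists>v. \<forall>w. stabilizer G (v @ w) = stabilizer G v"
proof -
  obtain v where v_min: "\<And>u. card (stabilizer G v) \<le> card (stabilizer G u)"
    using ex_has_least_nat[of "\<lambda>_. True" "[]" "\<lambda>u. card (stabilizer G u)"] by auto
  have "stabilizer G (v @ w) = stabilizer G v" for w
  proof (rule card_subset_eq)
    show "finite (stabilizer G v)" using assms(2) by (simp add: stabilizer_def)
    show "stabilizer G (v @ w) \<subseteq> stabilizer G v"
      using assms(1) by (rule stabilizer_append_subset)
    with \<open>finite (stabilizer G v)\<close> show "card (stabilizer G (v @ w)) = card (stabilizer G v)"
      using v_min[of "v @ w"] by (meson card_mono le_antisym)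
  qed
  then show ?thesis by blast
qed

locale stable_vertex =
  fixes G :: "('a::finite list \<Rightarrow> 'a list) set" and v :: "'a list"
  assumes isometries: "G \<subseteq> tree_isometries"
    and id_mem: "id \<in> G"
    and comp_mem: "g \<in> G \<Longrightarrow> h \<in> G \<Longrightarrow> g \<circ> h \<in> G"
    and inv_mem: "g \<in> G \<Longrightarrow> inv g \<in> G"
    and stabilizer_below: "stabilizer G (v @ w) = stabilizer G v"
begin

lemma mem_isometry: "g \<in> G \<Longrightarrow> g \<in> tree_isometries"
  using isometries by blast

lemma inv_apply_mem:
  "g \<in> G \<Longrightarrow> inv g (g u) = u"
  using mem_isometry by (simp add: tree_isometries_def bij_is_inj)

lemma agree_below:
  assumes "g \<in> G" "h \<in> G" "g v = h v"
  shows "g (v @ w) = h (v @ w)"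
proof -
  have "(inv g \<circ> h) v = v" using assms inv_apply_mem[of g v] by simp
  moreover have "inv g \<circ> h \<in> G" using assms by (simp add: comp_mem inv_mem)
  ultimately have "inv g \<circ> h \<in> stabilizer G v" by (simp add: stabilizer_def)
  then have "inv g \<circ> h \<in> stabilizer G (v @ w)" by (simp only: stabilizer_below)
  then have "g (inv g (h (v @ w))) = g (v @ w)" by (simp add: stabilizer_def)
  then show ?thesis using mem_isometry[OF \<open>g \<in> G\<close>] by (simp add: tree_isometry_inv_apply)
qed

lemma translate_eqD:
  assumes "g \<in> G" "h \<in> G" "g (v @ w) = h (v @ w')"
  shows "g v = h v" and "w = w'"
proof -
  show "g v = h v"
    using arg_cong[OF assms(3), of "take (length v)"] mem_isometry assms(1,2)
    by (simp add: take_tree_isometry_append)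
  then have "g (v @ w') = g (v @ w)" using agree_below assms by simp
  then show "w = w'"
    using mem_isometry[OF \<open>g \<in> G\<close>] by (simp add: tree_isometries_def bij_is_inj inj_eq)
qed

definition subtree_orbit :: "'a list set" where
  "subtree_orbit = {g (v @ w) | g w. g \<in> G}"

definition lift :: "('a list \<Rightarrow> 'a list) \<Rightarrow> 'a list \<Rightarrow> 'a list" where
  "lift a u = (if u \<in> subtree_orbit
     then SOME y. \<exists>g\<in>G. \<exists>w. u = g (v @ w) \<and> y = g (v @ a w) else u)"

lemma lift_translate:
  assumes "g \<in> G"
  shows "lift a (g (v @ w)) = g (v @ a w)"
proof -
  have "(SOME y. \<exists>h\<in>G. \<exists>w'. g (v @ w) = h (v @ w') \<and> y = h (v @ a w')) = g (v @ a w)"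
  proof (rule some_equality)
    fix y assume "\<exists>h\<in>G. \<exists>w'. g (v @ w) = h (v @ w') \<and> y = h (v @ a w')"
    then show "y = g (v @ a w)"
      using assms translate_eqD agree_below by metis
  qed (use assms in blast)
  moreover have "g (v @ w) \<in> subtree_orbit" using assms by (auto simp: subtree_orbit_def)
  ultimately show ?thesis by (simp add: lift_def)
qed

lemma lift_outside: "u \<notin> subtree_orbit \<Longrightarrow> lift a u = u"
  by (simp add: lift_def)

lemma lift_comp: "lift a \<circ> lift b = lift (a \<circ> b)"
proof
  fix u show "(lift a \<circ> lift b) u = lift (a \<circ> b) u"
    by (cases "u \<in> subtree_orbit") (auto simp: subtree_orbit_def lift_translate lift_outside)
qed

lemma lift_id: "lift id = id"
proof
  fix u show "lift id u = id u"
    by (cases "u \<in> subtree_orbit") (auto simp: subtree_orbit_def lift_translate lift_outside)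
qed

lemma snoc_mem_subtree_orbit:
  assumes "u @ [x] \<in> subtree_orbit" and "u \<notin> subtree_orbit"
  obtains g where "g \<in> G" and "u @ [x] = g v"
proof -
  obtain g w where g: "g \<in> G" "u @ [x] = g (v @ w)"
    using assms(1) by (auto simp: subtree_orbit_def)
  show ?thesis
  proof (cases w rule: rev_exhaust)
    case Nil
    with g that show ?thesis by simp
  next
    case (snoc w' z)
    obtain y where "g (v @ w' @ [z]) = g (v @ w') @ [y]"
      using tree_isometry_snoc[OF mem_isometry[OF \<open>g \<in> G\<close>], of "v @ w'" z] by auto
    with g snoc have "u = g (v @ w')" by simp
    with \<open>g \<in> G\<close> assms(2) show ?thesis by (auto simp: subtree_orbit_def)
  qed
qed

lemma lift_snoc:
  assumes "a \<in> tree_isometries"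
  shows "\<exists>y. lift a (u @ [x]) = lift a u @ [y]"
proof (cases "u \<in> subtree_orbit")
  case True
  then obtain g w where g: "g \<in> G" "u = g (v @ w)" by (auto simp: subtree_orbit_def)
  obtain y where "inv g (u @ [x]) = inv g u @ [y]"
    using tree_isometry_snoc[OF inv_tree_isometry[OF mem_isometry[OF \<open>g \<in> G\<close>]]] by blast
  also have "\<dots> = v @ w @ [y]" using g inv_apply_mem by simp
  finally have "g (inv g (u @ [x])) = g (v @ w @ [y])" by simp
  then have "u @ [x] = g (v @ w @ [y])"
    by (simp add: tree_isometry_inv_apply[OF mem_isometry[OF \<open>g \<in> G\<close>]])
  moreover obtain c where "a (w @ [y]) = a w @ [c]"
    using tree_isometry_snoc[OF assms] by blast
  moreover obtain c' where "g (v @ a w @ [c]) = g (v @ a w) @ [c']"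
    using tree_isometry_snoc[OF mem_isometry[OF \<open>g \<in> G\<close>], of "v @ a w" c] by auto
  ultimately show ?thesis using g by (simp add: lift_translate)
next
  case False
  show ?thesis
  proof (cases "u @ [x] \<in> subtree_orbit")
    case True
    then obtain g where "g \<in> G" "u @ [x] = g v"
      using False by (rule snoc_mem_subtree_orbit)
    then have "lift a (u @ [x]) = u @ [x]"
      using lift_translate[of g a "[]"] tree_isometry_Nil[OF assms] by simp
    with False show ?thesis by (simp add: lift_outside)
  qed (use False in \<open>simp add: lift_outside\<close>)
qed

lemma lift_tree_isometry:
  assumes "a \<in> tree_isometries"
  shows "lift a \<in> tree_isometries"
proof (rule tree_isometryI)
  have "bij a" using assms by (simp add: tree_isometries_def)
  then have "inv a \<circ> a = id" "a \<circ> inv a = id"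
    by (simp_all add: bij_is_inj bij_is_surj flip: surj_iff)
  then show "lift (inv a) \<circ> lift a = id" "lift a \<circ> lift (inv a) = id"
    by (simp_all add: lift_comp lift_id)
qed (use assms inv_tree_isometry lift_snoc in blast)+

lemma apply_mem_subtree_orbit_iff:
  assumes "k \<in> G"
  shows "k u \<in> subtree_orbit \<longleftrightarrow> u \<in> subtree_orbit"
proof
  assume "k u \<in> subtree_orbit"
  then obtain g w where "g \<in> G" "k u = g (v @ w)" by (auto simp: subtree_orbit_def)
  then have "u = (inv k \<circ> g) (v @ w)" using assms inv_apply_mem by (metis comp_apply)
  moreover have "inv k \<circ> g \<in> G" using assms \<open>g \<in> G\<close> by (simp add: comp_mem inv_mem)
  ultimately show "u \<in> subtree_orbit" unfolding subtree_orbit_def by blast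
next
  assume "u \<in> subtree_orbit"
  then obtain g w where "g \<in> G" "u = g (v @ w)" by (auto simp: subtree_orbit_def)
  then have "k u = (k \<circ> g) (v @ w)" by simp
  with assms \<open>g \<in> G\<close> show "k u \<in> subtree_orbit"
    unfolding subtree_orbit_def by (blast intro: comp_mem)
qed

lemma lift_commute:
  assumes "k \<in> G"
  shows "lift a \<circ> k = k \<circ> lift a"
proof
  fix u show "(lift a \<circ> k) u = (k \<circ> lift a) u"
  proof (cases "u \<in> subtree_orbit")
    case True
    then obtain g w where "g \<in> G" "u = g (v @ w)" by (auto simp: subtree_orbit_def)
    with assms show ?thesis
      using lift_translate[of g] lift_translate[of "k \<circ> g"] comp_mem[of k g] by simp
  next
    case False
    with assms show ?thesis by (simp add: lift_outside apply_mem_subtree_orbit_iff)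
  qed
qed

lemma inj_lift: "inj lift"
proof
  fix a b assume "lift a = lift b"
  then have "v @ a w = v @ b w" for w
    using lift_translate[OF id_mem] by (metis id_apply)
  then show "a = b" by auto
qed

theorem uncountable_centralizer:
  assumes "CARD('a) \<ge> 2"
  shows "uncountable (centralizer_W G)"
proof
  have "lift ` tree_isometries \<subseteq> centralizer_W G"
    by (auto simp: centralizer_W_def lift_tree_isometry lift_commute)
  moreover assume "countable (centralizer_W G)"
  ultimately have "countable (lift ` tree_isometries)" by (rule countable_subset)
  then have "countable (tree_isometries :: ('a list \<Rightarrow> 'a list) set)"
    using inj_on_subset[OF inj_lift subset_UNIV] by (rule countable_image_inj_on)
  with uncountable_tree_isometries[OF assms] show False by contradiction
qed

end

theorem theorem3p12:
  fixes G :: "('a::finite list \<Rightarrow> 'a list) set"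
  assumes "CARD('a) \<ge> 2"
    and "G \<subseteq> tree_isometries"
    and "finite G"
    and "id \<in> G"
    and "\<And>g h. g \<in> G \<Longrightarrow> h \<in> G \<Longrightarrow> g \<circ> h \<in> G"
    and "\<And>g. g \<in> G \<Longrightarrow> inv g \<in> G"
  shows "\<not> countable (centralizer_W G)"
proof -
  obtain v where "\<And>w. stabilizer G (v @ w) = stabilizer G v"
    using ex_stable_vertex[OF assms(2,3)] by blast
  then interpret stable_vertex G v
    using assms(2,4-6) by unfold_locales
  show ?thesis using assms(1) by (rule uncountable_centralizer)
qed

end
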